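(* Let $p$ be a binary word of length $l$, and for $i\ge1$ let $r_i$ be the number of runs of $p$ of size $i$. Then for every $k\ge 2$, $$B_{l+1,p}(k)=r_{k-1}.$$
   Context: $c_p(w)$ is the number of occurrences of $p$ as a (not necessarily consecutive) subsequence of the binary word $w$; $B_{n,p}(k)$ is the number of binary words of length $n$ with $c_p(w)=k$. A run is a maximal block of consecutive equal letters; its size is its length. *)

theory Defs
  imports Main
begin

definition occ :: "bool list \<Rightarrow> bool list \<Rightarrow> nat" where
  "occ p w = card {I. I \<subseteq> {..<length w} \<and> card I = length p \<and> nths w I = p}"

definition B :: "nat \<Rightarrow> bool list \<Rightarrow> nat \<Rightarrow> nat" where
  "B n p k = card {w :: bool list. length w = n \<and> occ p w = k}"

definition runs_of_size :: "bool list \<Rightarrow> nat \<Rightarrow> nat" where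
  "runs_of_size p i = card {(a, b). a < b \<and> b \<le> length p \<and> b - a = i
      \<and> (\<forall>j\<in>{a..<b}. p ! j = p ! a)
      \<and> (a = 0 \<or> p ! (a - 1) \<noteq> p ! a)
      \<and> (b = length p \<or> p ! b \<noteq> p ! a)}"

end

theory Submission
  imports Defs
begin

text \<open>Since |w| = |p| + 1, an occurrence of p in w omits exactly one position j, so
occ p w counts the positions j whose deletion leaves p. Deleting positions i \<le> j
gives the same word iff w is constant on [i..j]; hence these positions form a run
of w, and if there are k \<ge> 2 of them then w arises from p by lengthening a run of
size k - 1 by one letter. Conversely, lengthening a maximal run [a, b) of p yields a
word whose deletion positions are exactly {a..b}.\<close>

definition del :: "nat \<Rightarrow> 'a list \<Rightarrow> 'a list" where
  "del j w = take j w @ drop (Suc j) w"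

definition ins :: "nat \<Rightarrow> 'a \<Rightarrow> 'a list \<Rightarrow> 'a list" where
  "ins a c p = take a p @ c # drop a p"

definition maximal_run :: "'a list \<Rightarrow> nat \<Rightarrow> nat \<Rightarrow> bool" where
  "maximal_run p a b \<longleftrightarrow> a < b \<and> b \<le> length p
      \<and> (\<forall>j\<in>{a..<b}. p ! j = p ! a)
      \<and> (a = 0 \<or> p ! (a - 1) \<noteq> p ! a)
      \<and> (b = length p \<or> p ! b \<noteq> p ! a)"

definition deletions :: "'a list \<Rightarrow> 'a list \<Rightarrow> nat set" where
  "deletions p w = {j. j < length w \<and> del j w = p}"

lemma maximal_run_bounds: "maximal_run p a b \<Longrightarrow> a < b \<and> b \<le> length p"
  unfolding maximal_run_def by blast

lemma runs_of_size_eq_card_maximal_run: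
  "runs_of_size p i = card {(a, b). maximal_run p a b \<and> b - a = i}"
  unfolding runs_of_size_def maximal_run_def by (intro arg_cong[where f = card]) blast

lemma length_del: "j < length w \<Longrightarrow> length (del j w) = length w - 1"
  by (simp add: del_def)

lemma nth_del: "i < length w - 1 \<Longrightarrow> del j w ! i = (if i < j then w ! i else w ! Suc i)"
  by (auto simp: del_def nth_append min_def)

lemma length_ins: "a \<le> length p \<Longrightarrow> length (ins a c p) = Suc (length p)"
  by (simp add: ins_def)

lemma nth_ins:
  "a \<le> length p \<Longrightarrow> i \<le> length p \<Longrightarrow>
    ins a c p ! i = (if i < a then p ! i else if i = a then c else p ! (i - 1))"
  by (auto simp: ins_def nth_append min_def nth_Cons')

lemma del_ins: "a \<le> length p \<Longrightarrow> del a (ins a c p) = p"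
  by (simp add: del_def ins_def)

lemma ins_del: "j < length w \<Longrightarrow> ins j (w ! j) (del j w) = w"
  by (simp add: del_def ins_def id_take_nth_drop[symmetric])

lemma nths_lessThan_minus_singleton:
  assumes "j < length w"
  shows "nths w ({..<length w} - {j}) = del j w"
proof -
  have w: "w = take j w @ w ! j # drop (Suc j) w"
    using assms by (simp add: id_take_nth_drop)
  have "nths w ({..<length w} - {j}) =
      nths (take j w) ({..<length w} - {j})
      @ nths (w ! j # drop (Suc j) w) {i. i + length (take j w) \<in> {..<length w} - {j}}"
    by (subst w, rule nths_append)
  also have "nths (take j w) ({..<length w} - {j}) = take j w"
    using assms by (intro nths_all) auto
  also have "nths (w ! j # drop (Suc j) w) {i. i + length (take j w) \<in> {..<length w} - {j}}
      = drop (Suc j) w"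
    using assms by (simp add: nths_Cons, intro nths_all) auto
  finally show ?thesis by (simp add: del_def)
qed

lemma subset_lessThan_card_pred:
  assumes "I \<subseteq> {..<n}" "card I = n - 1" "0 < n"
  obtains j where "j < n" "I = {..<n} - {j}"
proof -
  have "card ({..<n} - I) = 1"
    using assms by (simp add: card_Diff_subset finite_subset)
  then obtain j where "{..<n} - I = {j}" by (auto simp: card_Suc_eq)
  with assms(1) show ?thesis by (intro that) auto
qed

lemma occ_eq_card_deletions:
  assumes len: "length w = Suc (length p)"
  shows "occ p w = card (deletions p w)"
proof -
  let ?n = "length w"
  have "{I. I \<subseteq> {..<?n} \<and> card I = length p \<and> nths w I = p}
      = (\<lambda>j. {..<?n} - {j}) ` deletions p w"
  proof (intro set_eqI iffI)
    fix I assume "I \<in> {I. I \<subseteq> {..<?n} \<and> card I = length p \<and> nths w I = p}"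
    then have I: "I \<subseteq> {..<?n}" "card I = ?n - 1" "nths w I = p" using len by auto
    from I(1,2) obtain j where j: "j < ?n" "I = {..<?n} - {j}"
      by (rule subset_lessThan_card_pred) (simp add: len)
    with I(3) have "j \<in> deletions p w"
      by (simp add: deletions_def nths_lessThan_minus_singleton)
    with j(2) show "I \<in> (\<lambda>j. {..<?n} - {j}) ` deletions p w" by blast
  next
    fix I assume "I \<in> (\<lambda>j. {..<?n} - {j}) ` deletions p w"
    then obtain j where j: "j < ?n" "del j w = p" "I = {..<?n} - {j}"
      by (auto simp: deletions_def)
    then have "nths w I = p" by (simp add: nths_lessThan_minus_singleton)
    moreover have "card I = length p" using j len by simp
    ultimately show "I \<in> {I. I \<subseteq> {..<?n} \<and> card I = length p \<and> nths w I = p}"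
      using j(3) by blast
  qed
  moreover have "inj_on (\<lambda>j. {..<?n} - {j}) (deletions p w)"
    by (rule inj_onI) (auto simp: deletions_def)
  ultimately show ?thesis
    unfolding occ_def by (simp add: card_image)
qed

lemma constant_on_atLeastAtMost_iff_steps:
  fixes f :: "nat \<Rightarrow> 'a"
  assumes "i \<le> j"
  shows "(\<forall>m\<in>{i..j}. f m = f i) \<longleftrightarrow> (\<forall>m\<in>{i..<j}. f (Suc m) = f m)"
  using assms
proof (induction j rule: dec_induct)
  case base
  show ?case by simp
next
  case (step n)
  have intervals: "{i..Suc n} = insert (Suc n) {i..n}" "{i..<Suc n} = insert n {i..<n}"
    using step.hyps(1) by auto
  have "n \<in> {i..n}" using step.hyps(1) by simp
  with step.IH show ?case unfolding intervals ball_simps(7) by metis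
qed

lemma del_eq_del_iff:
  assumes "i \<le> j" "j < length w"
  shows "del i w = del j w \<longleftrightarrow> (\<forall>m\<in>{i..j}. w ! m = w ! i)"
proof -
  have "del i w = del j w \<longleftrightarrow> (\<forall>m\<in>{i..<j}. w ! Suc m = w ! m)"
  proof
    assume eq: "del i w = del j w"
    show "\<forall>m\<in>{i..<j}. w ! Suc m = w ! m"
    proof
      fix m assume m: "m \<in> {i..<j}"
      then have "m < length w - 1" using assms(2) by auto
      with m show "w ! Suc m = w ! m"
        using arg_cong[OF eq, of "\<lambda>v. v ! m"] by (simp add: nth_del)
    qed
  next
    assume steps: "\<forall>m\<in>{i..<j}. w ! Suc m = w ! m"
    show "del i w = del j w"
      using assms steps by (intro nth_equalityI) (auto simp: length_del nth_del)
  qed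
  also have "\<dots> \<longleftrightarrow> (\<forall>m\<in>{i..j}. w ! m = w ! i)"
    by (rule constant_on_atLeastAtMost_iff_steps[OF assms(1), symmetric])
  finally show ?thesis .
qed

lemma mem_deletions_iff_constant_right:
  assumes "i \<in> deletions p w" "i \<le> j" "j < length w"
  shows "j \<in> deletions p w \<longleftrightarrow> (\<forall>m\<in>{i..j}. w ! m = w ! i)"
proof -
  have "j \<in> deletions p w \<longleftrightarrow> del i w = del j w"
    using assms by (auto simp: deletions_def)
  also have "\<dots> \<longleftrightarrow> (\<forall>m\<in>{i..j}. w ! m = w ! i)"
    by (rule del_eq_del_iff[OF assms(2,3)])
  finally show ?thesis .
qed

lemma mem_deletions_iff_constant_left:
  assumes "i \<in> deletions p w" "j \<le> i"
  shows "j \<in> deletions p w \<longleftrightarrow> (\<forall>m\<in>{j..i}. w ! m = w ! j)"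
proof -
  have "i < length w" using assms(1) by (simp add: deletions_def)
  then have "j \<in> deletions p w \<longleftrightarrow> del j w = del i w"
    using assms by (auto simp: deletions_def)
  also have "\<dots> \<longleftrightarrow> (\<forall>m\<in>{j..i}. w ! m = w ! j)"
    by (rule del_eq_del_iff[OF assms(2) \<open>i < length w\<close>])
  finally show ?thesis .
qed

lemma deletions_ins_maximal_run:
  assumes run: "maximal_run p a b"
  shows "deletions p (ins a (p ! a) p) = {a..b}"
proof -
  let ?w = "ins a (p ! a) p"
  from run[unfolded maximal_run_def]
  have ab: "a < b" "b \<le> length p" and const: "\<forall>j\<in>{a..<b}. p ! j = p ! a"
    and start: "a = 0 \<or> p ! (a - 1) \<noteq> p ! a" and stop: "b = length p \<or> p ! b \<noteq> p ! a"
    by blast+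
  have len: "length ?w = Suc (length p)" using ab by (simp add: length_ins)
  have w: "?w ! i = (if i < a then p ! i else if i = a then p ! a else p ! (i - 1))"
    if "i \<le> length p" for i
    using ab that by (simp add: nth_ins)
  have w_run: "?w ! m = p ! a" if "m \<in> {a..b}" for m
  proof (cases "m = a")
    case False
    with that have "m - 1 \<in> {a..<b}" by auto
    have "?w ! m = p ! (m - 1)" using w[of m] that False ab by simp
    also have "\<dots> = p ! a" using bspec[OF const \<open>m - 1 \<in> {a..<b}\<close>] .
    finally show ?thesis .
  qed (use ab w in simp)
  have a_mem: "a \<in> deletions p ?w" using ab len by (simp add: deletions_def del_ins)
  show ?thesis
  proof (intro set_eqI iffI)
    fix j assume j: "j \<in> deletions p ?w"
    have "a \<le> j"
    proof (rule ccontr)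
      assume "\<not> a \<le> j"
      then have "j \<le> a" by simp
      from iffD1[OF mem_deletions_iff_constant_left[OF a_mem this] j]
      have w_const: "\<forall>m\<in>{j..a}. ?w ! m = ?w ! j" .
      have "a - 1 \<in> {j..a}" "a \<in> {j..a}" using \<open>\<not> a \<le> j\<close> by auto
      then have "?w ! (a - 1) = ?w ! a" using w_const by (metis bspec)
      with \<open>\<not> a \<le> j\<close> ab w[of "a - 1"] w[of a] start show False by simp
    qed
    moreover have "j \<le> b"
    proof (rule ccontr)
      assume "\<not> j \<le> b"
      then have "a \<le> j" using ab by simp
      moreover have "j < length ?w" using j by (simp add: deletions_def)
      ultimately have w_const: "\<forall>m\<in>{a..j}. ?w ! m = ?w ! a"
        using iffD1[OF mem_deletions_iff_constant_right[OF a_mem] j] by blast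
      have "Suc b \<in> {a..j}" using \<open>\<not> j \<le> b\<close> ab by auto
      with w_const have "?w ! Suc b = ?w ! a" by (rule bspec)
      with \<open>\<not> j \<le> b\<close> \<open>j < length ?w\<close> len ab w[of "Suc b"] w[of a] stop show False by simp
    qed
    ultimately show "j \<in> {a..b}" by simp
  next
    fix j assume j: "j \<in> {a..b}"
    then have "a \<le> j" "j < length ?w" using ab len by simp_all
    moreover have "\<forall>m\<in>{a..j}. ?w ! m = ?w ! a"
      using j w_run by simp
    ultimately show "j \<in> deletions p ?w"
      using mem_deletions_iff_constant_right[OF a_mem] by blast
  qed
qed

lemma maximal_run_del:
  assumes "a < b" "b < length w" and w_run: "\<forall>m\<in>{a..b}. w ! m = w ! a"
    and start: "a = 0 \<or> w ! (a - 1) \<noteq> w ! a"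
    and stop: "Suc b = length w \<or> w ! Suc b \<noteq> w ! a"
  shows "maximal_run (del a w) a b"
proof -
  let ?p = "del a w"
  have len: "length ?p = length w - 1" using assms(1,2) by (simp add: length_del)
  have p_nth: "?p ! i = (if i < a then w ! i else w ! Suc i)" if "i < length ?p" for i
    using that len by (simp add: nth_del)
  have run_val: "w ! m = w ! a" if "a \<le> m" "m \<le> b" for m
    using that by (intro bspec[OF w_run]) simp
  have p_a: "?p ! a = w ! a"
    using p_nth[of a] assms(1,2) len run_val[of "Suc a"] by simp
  have "\<forall>j\<in>{a..<b}. ?p ! j = ?p ! a"
  proof
    fix j assume j: "j \<in> {a..<b}"
    then have "j < length ?p" using assms(2) len by auto
    with j show "?p ! j = ?p ! a"
      using p_nth[of j] run_val[of "Suc j"] p_a by simp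
  qed
  moreover have "a = 0 \<or> ?p ! (a - 1) \<noteq> ?p ! a"
    using start p_nth[of "a - 1"] assms(1,2) len p_a by auto
  moreover have "b = length ?p \<or> ?p ! b \<noteq> ?p ! a"
  proof (cases "b < length ?p")
    case True
    with stop p_nth[of b] assms(1) len p_a show ?thesis by auto
  qed (use assms(2) len in linarith)
  moreover have "b \<le> length ?p" using assms(2) len by simp
  ultimately show ?thesis
    unfolding maximal_run_def using assms(1) by blast
qed

lemma maximal_run_of_deletions:
  assumes len: "length w = Suc (length p)" and two: "2 \<le> card (deletions p w)"
  obtains a b where "maximal_run p a b" "w = ins a (p ! a) p"
proof -
  let ?J = "deletions p w"
  have fin: "finite ?J" by (simp add: deletions_def)
  with two have ne: "?J \<noteq> {}" by auto
  define a where "a = Min ?J"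
  define b where "b = Max ?J"
  have aJ: "a \<in> ?J" and bJ: "b \<in> ?J" using fin ne by (simp_all add: a_def b_def)
  have a_min: "a \<le> j" and b_max: "j \<le> b" if "j \<in> ?J" for j
    using fin that by (simp_all add: a_def b_def)
  have ab: "a < b"
  proof (rule ccontr)
    assume "\<not> a < b"
    with a_min b_max have "?J \<subseteq> {a}" by force
    then have "card ?J \<le> 1" using card_mono[of "{a}" ?J] by simp
    with two show False by simp
  qed
  from aJ bJ have del_a: "del a w = p" and b_len: "b < length w"
    by (simp_all add: deletions_def)
  have w_run: "\<forall>m\<in>{a..b}. w ! m = w ! a"
    using mem_deletions_iff_constant_right[OF aJ less_imp_le[OF ab] b_len] bJ by blast
  have start: "a = 0 \<or> w ! (a - 1) \<noteq> w ! a"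
  proof (rule ccontr)
    assume "\<not> (a = 0 \<or> w ! (a - 1) \<noteq> w ! a)"
    then have "0 < a" "w ! (a - 1) = w ! a" by simp_all
    moreover have "{a - 1..a} = {a - 1, a}" using \<open>0 < a\<close> by auto
    ultimately have step: "\<forall>m\<in>{a - 1..a}. w ! m = w ! (a - 1)" by simp
    from iffD2[OF mem_deletions_iff_constant_left[OF aJ] step] have "a - 1 \<in> ?J" by simp
    with a_min \<open>0 < a\<close> show False by fastforce
  qed
  have stop: "Suc b = length w \<or> w ! Suc b \<noteq> w ! a"
  proof (rule ccontr)
    assume "\<not> (Suc b = length w \<or> w ! Suc b \<noteq> w ! a)"
    then have "Suc b < length w" "w ! Suc b = w ! a" using b_len by simp_all
    have extended_run: "\<forall>m\<in>{a..Suc b}. w ! m = w ! a"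
    proof
      fix m assume m: "m \<in> {a..Suc b}"
      show "w ! m = w ! a"
      proof (cases "m = Suc b")
        case False
        with m have "m \<in> {a..b}" by auto
        with w_run show ?thesis by (rule bspec)
      qed (simp add: \<open>w ! Suc b = w ! a\<close>)
    qed
    from ab have "a \<le> Suc b" by simp
    with mem_deletions_iff_constant_right[OF aJ _ \<open>Suc b < length w\<close>] extended_run
    have "Suc b \<in> ?J" by blast
    with b_max show False by fastforce
  qed
  from maximal_run_del[OF ab b_len w_run start stop] have "maximal_run p a b"
    by (simp add: del_a)
  moreover have "w = ins a (p ! a) p"
  proof -
    have "p ! a = w ! a"
      using maximal_run_bounds[OF \<open>maximal_run p a b\<close>] b_len len
        nth_del[of a w a] del_a bspec[OF w_run, of "Suc a"] ab by simp
    with ins_del[of a w] ab b_len show ?thesis by (simp add: del_a)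
  qed
  ultimately show thesis by (rule that)
qed

lemma occ_ins_maximal_run:
  assumes "maximal_run p a b"
  shows "occ p (ins a (p ! a) p) = Suc (b - a)"
proof -
  from maximal_run_bounds[OF assms] have "a < b" "b \<le> length p" by simp_all
  then have "length (ins a (p ! a) p) = Suc (length p)" by (simp add: length_ins)
  with assms \<open>a < b\<close> show ?thesis
    by (simp add: occ_eq_card_deletions deletions_ins_maximal_run)
qed

lemma inj_on_ins_maximal_run:
  "inj_on (\<lambda>(a, b). ins a (p ! a) p) {(a, b). maximal_run p a b}"
proof (rule inj_onI, clarsimp)
  fix a b c d
  assume "maximal_run p a b" "maximal_run p c d" "ins a (p ! a) p = ins c (p ! c) p"
  then have "{a..b} = {c..d}" by (metis deletions_ins_maximal_run)
  with maximal_run_bounds[OF \<open>maximal_run p a b\<close>] maximal_run_bounds[OF \<open>maximal_run p c d\<close>]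
  show "a = c \<and> b = d" by (simp add: Icc_eq_Icc)
qed

lemma words_with_occ_eq_image_maximal_runs:
  assumes "2 \<le> k"
  shows "{w. length w = Suc (length p) \<and> occ p w = k}
    = (\<lambda>(a, b). ins a (p ! a) p) ` {(a, b). maximal_run p a b \<and> b - a = k - 1}"
proof (intro set_eqI iffI)
  fix w assume "w \<in> {w. length w = Suc (length p) \<and> occ p w = k}"
  then have len: "length w = Suc (length p)" and occ: "occ p w = k" by simp_all
  with assms have "2 \<le> card (deletions p w)" by (simp add: occ_eq_card_deletions)
  with len obtain a b where run: "maximal_run p a b" and w: "w = ins a (p ! a) p"
    by (rule maximal_run_of_deletions)
  from occ_ins_maximal_run[OF run] occ w have "b - a = k - 1" by simp
  with run w show "w \<in> (\<lambda>(a, b). ins a (p ! a) p) ` {(a, b). maximal_run p a b \<and> b - a = k - 1}"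
    by (intro image_eqI[where x = "(a, b)"]) simp_all
next
  fix w assume "w \<in> (\<lambda>(a, b). ins a (p ! a) p) ` {(a, b). maximal_run p a b \<and> b - a = k - 1}"
  then obtain a b where run: "maximal_run p a b" "b - a = k - 1" and w: "w = ins a (p ! a) p"
    by auto
  from maximal_run_bounds[OF run(1)] have "a \<le> length p" by simp
  with run assms w show "w \<in> {w. length w = Suc (length p) \<and> occ p w = k}"
    by (simp add: length_ins occ_ins_maximal_run)
qed

theorem mainTheorem4:
  fixes p :: "bool list" and k :: nat
  assumes "k \<ge> 2"
  shows "B (length p + 1) p k = runs_of_size p (k - 1)"
proof -
  have "inj_on (\<lambda>(a, b). ins a (p ! a) p) {(a, b). maximal_run p a b \<and> b - a = k - 1}"
    by (rule inj_on_subset[OF inj_on_ins_maximal_run]) blast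
  then show ?thesis
    unfolding B_def runs_of_size_eq_card_maximal_run
    using words_with_occ_eq_image_maximal_runs[OF assms] by (simp add: card_image)
qed

end
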